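(* Let $\mathcal B$ be an extriangulated category with enough projectives and enough injectives, and let $(\mathcal C,\mathcal C^{\perp_1})$ be a cotorsion pair with $\mathcal C$ rigid, with heart $\mathcal H/\mathcal C$. Let $g:A\twoheadrightarrow B$ be a deflation with $A,B\in\mathcal H$ such that $\overline g$ is an epimorphism in $\mathcal H/\mathcal C$. Then for every $X\in\Omega\mathcal C$ the map $\operatorname{Hom}_{\mathcal B}(X,g):\operatorname{Hom}_{\mathcal B}(X,A)\to\operatorname{Hom}_{\mathcal B}(X,B)$ is surjective.
   Context: $(\mathcal B,\mathbb E,\mathfrak s)$ is an extriangulated category (Nakaoka–Palu); conflations $A\rightarrowtail B\twoheadrightarrow C$. Subcategories are full, additive, closed under isomorphisms and finite direct sums. $\mathcal P$ = projectives; $\mathcal C^{\perp_1}=\{B\mid\mathbb E(\mathcal C,B)=0\}$; $\mathcal C$ rigid means $\mathbb E(\mathcal C,\mathcal C)=0$. $\Omega\mathcal C$ is the class of objects $U$ admitting a conflation $U\rightarrowtail P\twoheadrightarrow C$ with $P\in\mathcal P$, $C\in\mathcal C$. For a cotorsion pair $(\mathcal U,\mathcal V)$ (summand-closed, $\mathbb E(\mathcal U,\mathcal V)=0$, every $B$ admits conflations $V_B\rightarrowtail U_B\twoheadrightarrow B$, $B\rightarrowtail V^B\twoheadrightarrow U^B$ with $U$'s in $\mathcal U$, $V$'s in $\mathcal V$), $\mathcal H$ is the subcategory of objects admitting such conflations with $U_B,V^B\in\mathcal U\cap\mathcal V$, and the heart is the ideal quotient $\mathcal H/(\mathcal U\cap\mathcal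 V)$, which is abelian; here $\mathcal U\cap\mathcal V=\mathcal C$. $\overline g$ is the image of $g$ in the heart. *)

theory Defs
  imports Main
begin

text \<open>
  Objects are all elements of type 'o, morphisms live in 'm, extensions in 'e.
  Hom X Y is the set of morphisms X -> Y; Cmp g f is the composite g o f.
  Ext C A is the abelian group E(C,A); Push a d = a_* d, Pull c d = c^* d.
  Real A B C x y d means: the sequence A -x-> B -y-> C belongs to s(d), d in E(C,A).
\<close>

record ('o,'m,'e) ecat =
  Hom   :: "'o \<Rightarrow> 'o \<Rightarrow> 'm set"
  Cmp   :: "'m \<Rightarrow> 'm \<Rightarrow> 'm"
  Idn   :: "'o \<Rightarrow> 'm"
  MAdd  :: "'m \<Rightarrow> 'm \<Rightarrow> 'm"
  MZero :: "'o \<Rightarrow> 'o \<Rightarrow> 'm"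
  MNeg  :: "'m \<Rightarrow> 'm"
  Ext   :: "'o \<Rightarrow> 'o \<Rightarrow> 'e set"
  EAdd  :: "'e \<Rightarrow> 'e \<Rightarrow> 'e"
  EZero :: "'o \<Rightarrow> 'o \<Rightarrow> 'e"
  ENeg  :: "'e \<Rightarrow> 'e"
  Push  :: "'m \<Rightarrow> 'e \<Rightarrow> 'e"
  Pull  :: "'m \<Rightarrow> 'e \<Rightarrow> 'e"
  Real  :: "'o \<Rightarrow> 'o \<Rightarrow> 'o \<Rightarrow> 'm \<Rightarrow> 'm \<Rightarrow> 'e \<Rightarrow> bool"

definition is_zero_obj :: "('o,'m,'e) ecat \<Rightarrow> 'o \<Rightarrow> bool" where
  "is_zero_obj E Z \<longleftrightarrow> (\<forall>A. Hom E A Z = {MZero E A Z} \<and> Hom E Z A = {MZero E Z A})"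

definition is_biprod :: "('o,'m,'e) ecat \<Rightarrow> 'o \<Rightarrow> 'o \<Rightarrow> 'o \<Rightarrow> 'm \<Rightarrow> 'm \<Rightarrow> 'm \<Rightarrow> 'm \<Rightarrow> bool" where
  "is_biprod E S A B i1 i2 p1 p2 \<longleftrightarrow>
     i1 \<in> Hom E A S \<and> i2 \<in> Hom E B S \<and> p1 \<in> Hom E S A \<and> p2 \<in> Hom E S B \<and>
     Cmp E p1 i1 = Idn E A \<and> Cmp E p2 i2 = Idn E B \<and>
     Cmp E p2 i1 = MZero E A B \<and> Cmp E p1 i2 = MZero E B A \<and>
     MAdd E (Cmp E i1 p1) (Cmp E i2 p2) = Idn E S"

definition is_iso :: "('o,'m,'e) ecat \<Rightarrow> 'm \<Rightarrow> 'o \<Rightarrow> 'o \<Rightarrow> bool" where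
  "is_iso E b X Y \<longleftrightarrow> b \<in> Hom E X Y \<and>
     (\<exists>b' \<in> Hom E Y X. Cmp E b' b = Idn E X \<and> Cmp E b b' = Idn E Y)"

definition additive_cat :: "('o,'m,'e) ecat \<Rightarrow> bool" where
  "additive_cat E \<longleftrightarrow>
    (\<forall>A B A' B' f. f \<in> Hom E A B \<longrightarrow> f \<in> Hom E A' B' \<longrightarrow> A = A' \<and> B = B') \<and>
    (\<forall>A B D f g. f \<in> Hom E A B \<longrightarrow> g \<in> Hom E B D \<longrightarrow> Cmp E g f \<in> Hom E A D) \<and>
    (\<forall>A B D F f g h. f \<in> Hom E A B \<longrightarrow> g \<in> Hom E B D \<longrightarrow> h \<in> Hom E D F \<longrightarrow>
        Cmp E h (Cmp E g f) = Cmp E (Cmp E h g) f) \<and>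
    (\<forall>A. Idn E A \<in> Hom E A A) \<and>
    (\<forall>A B f. f \<in> Hom E A B \<longrightarrow> Cmp E f (Idn E A) = f \<and> Cmp E (Idn E B) f = f) \<and>
    (\<forall>A B. MZero E A B \<in> Hom E A B \<and>
       (\<forall>f \<in> Hom E A B. \<forall>g \<in> Hom E A B. MAdd E f g \<in> Hom E A B \<and> MAdd E f g = MAdd E g f) \<and>
       (\<forall>f \<in> Hom E A B. \<forall>g \<in> Hom E A B. \<forall>h \<in> Hom E A B.
           MAdd E (MAdd E f g) h = MAdd E f (MAdd E g h)) \<and>
       (\<forall>f \<in> Hom E A B. MNeg E f \<in> Hom E A B \<and> MAdd E f (MZero E A B) = f \<and>
           MAdd E f (MNeg E f) = MZero E A B)) \<and>
    (\<forall>A B D f1 f2 g. f1 \<in> Hom E A B \<longrightarrow> f2 \<in> Hom E A B \<longrightarrow> g \<in> Hom E B D \<longrightarrow>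
        Cmp E g (MAdd E f1 f2) = MAdd E (Cmp E g f1) (Cmp E g f2)) \<and>
    (\<forall>A B D f g1 g2. f \<in> Hom E A B \<longrightarrow> g1 \<in> Hom E B D \<longrightarrow> g2 \<in> Hom E B D \<longrightarrow>
        Cmp E (MAdd E g1 g2) f = MAdd E (Cmp E g1 f) (Cmp E g2 f)) \<and>
    (\<exists>Z. is_zero_obj E Z) \<and>
    (\<forall>A B. \<exists>S i1 i2 p1 p2. is_biprod E S A B i1 i2 p1 p2)"

definition biadditive_ext :: "('o,'m,'e) ecat \<Rightarrow> bool" where
  "biadditive_ext E \<longleftrightarrow>
    (\<forall>C A C' A' d. d \<in> Ext E C A \<longrightarrow> d \<in> Ext E C' A' \<longrightarrow> C = C' \<and> A = A') \<and>
    (\<forall>C A. EZero E C A \<in> Ext E C A \<and>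
       (\<forall>d \<in> Ext E C A. \<forall>e \<in> Ext E C A. EAdd E d e \<in> Ext E C A \<and> EAdd E d e = EAdd E e d) \<and>
       (\<forall>d \<in> Ext E C A. \<forall>e \<in> Ext E C A. \<forall>f \<in> Ext E C A.
           EAdd E (EAdd E d e) f = EAdd E d (EAdd E e f)) \<and>
       (\<forall>d \<in> Ext E C A. ENeg E d \<in> Ext E C A \<and> EAdd E d (EZero E C A) = d \<and>
           EAdd E d (ENeg E d) = EZero E C A)) \<and>
    (\<forall>C A A' a d. a \<in> Hom E A A' \<longrightarrow> d \<in> Ext E C A \<longrightarrow> Push E a d \<in> Ext E C A') \<and>
    (\<forall>C C' A c d. c \<in> Hom E C' C \<longrightarrow> d \<in> Ext E C A \<longrightarrow> Pull E c d \<in> Ext E C' A) \<and>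
    (\<forall>C A d. d \<in> Ext E C A \<longrightarrow> Push E (Idn E A) d = d \<and> Pull E (Idn E C) d = d) \<and>
    (\<forall>C A A' A'' a a' d. a \<in> Hom E A A' \<longrightarrow> a' \<in> Hom E A' A'' \<longrightarrow> d \<in> Ext E C A \<longrightarrow>
        Push E (Cmp E a' a) d = Push E a' (Push E a d)) \<and>
    (\<forall>C C' C'' A c c' d. c \<in> Hom E C' C \<longrightarrow> c' \<in> Hom E C'' C' \<longrightarrow> d \<in> Ext E C A \<longrightarrow>
        Pull E (Cmp E c c') d = Pull E c' (Pull E c d)) \<and>
    (\<forall>C C' A A' a c d. a \<in> Hom E A A' \<longrightarrow> c \<in> Hom E C' C \<longrightarrow> d \<in> Ext E C A \<longrightarrow>
        Push E a (Pull E c d) = Pull E c (Push E a d)) \<and>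
    (\<forall>C A A' a d e. a \<in> Hom E A A' \<longrightarrow> d \<in> Ext E C A \<longrightarrow> e \<in> Ext E C A \<longrightarrow>
        Push E a (EAdd E d e) = EAdd E (Push E a d) (Push E a e)) \<and>
    (\<forall>C A A' a1 a2 d. a1 \<in> Hom E A A' \<longrightarrow> a2 \<in> Hom E A A' \<longrightarrow> d \<in> Ext E C A \<longrightarrow>
        Push E (MAdd E a1 a2) d = EAdd E (Push E a1 d) (Push E a2 d)) \<and>
    (\<forall>C C' A c d e. c \<in> Hom E C' C \<longrightarrow> d \<in> Ext E C A \<longrightarrow> e \<in> Ext E C A \<longrightarrow>
        Pull E c (EAdd E d e) = EAdd E (Pull E c d) (Pull E c e)) \<and>
    (\<forall>C C' A c1 c2 d. c1 \<in> Hom E C' C \<longrightarrow> c2 \<in> Hom E C' C \<longrightarrow> d \<in> Ext E C A \<longrightarrow>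
        Pull E (MAdd E c1 c2) d = EAdd E (Pull E c1 d) (Pull E c2 d))"

text \<open>The realization s: each d in E(C,A) is assigned an equivalence class of sequences
  A -> B -> C (axioms (ET2) of Nakaoka--Palu, additive realization).\<close>
definition realization_ax :: "('o,'m,'e) ecat \<Rightarrow> bool" where
  "realization_ax E \<longleftrightarrow>
    (\<forall>A B C x y d. Real E A B C x y d \<longrightarrow>
        d \<in> Ext E C A \<and> x \<in> Hom E A B \<and> y \<in> Hom E B C) \<and>
    (\<forall>A C d. d \<in> Ext E C A \<longrightarrow> (\<exists>B x y. Real E A B C x y d)) \<and>
    (\<forall>A B C x y d. Real E A B C x y d \<longrightarrow>
        (\<forall>B' x' y'. Real E A B' C x' y' d \<longleftrightarrow>
            (\<exists>b. is_iso E b B B' \<and> Cmp E b x = x' \<and> Cmp E y' b = y))) \<and>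
    (\<forall>A B C x y d A' B' C' x' y' d' a c.
        Real E A B C x y d \<longrightarrow> Real E A' B' C' x' y' d' \<longrightarrow>
        a \<in> Hom E A A' \<longrightarrow> c \<in> Hom E C C' \<longrightarrow> Push E a d = Pull E c d' \<longrightarrow>
        (\<exists>b \<in> Hom E B B'. Cmp E b x = Cmp E x' a \<and> Cmp E y' b = Cmp E c y)) \<and>
    (\<forall>S A C i1 i2 p1 p2. is_biprod E S A C i1 i2 p1 p2 \<longrightarrow>
        Real E A S C i1 p2 (EZero E C A)) \<and>
    (\<forall>A B C x y d A' B' C' x' y' d'
        SA ia1 ia2 pa1 pa2 SB ib1 ib2 pb1 pb2 SC ic1 ic2 pc1 pc2.
        Real E A B C x y d \<longrightarrow> Real E A' B' C' x' y' d' \<longrightarrow>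
        is_biprod E SA A A' ia1 ia2 pa1 pa2 \<longrightarrow>
        is_biprod E SB B B' ib1 ib2 pb1 pb2 \<longrightarrow>
        is_biprod E SC C C' ic1 ic2 pc1 pc2 \<longrightarrow>
        Real E SA SB SC
          (MAdd E (Cmp E ib1 (Cmp E x pa1)) (Cmp E ib2 (Cmp E x' pa2)))
          (MAdd E (Cmp E ic1 (Cmp E y pb1)) (Cmp E ic2 (Cmp E y' pb2)))
          (EAdd E (Push E ia1 (Pull E pc1 d)) (Push E ia2 (Pull E pc2 d'))))"

definition ET3_ax :: "('o,'m,'e) ecat \<Rightarrow> bool" where
  "ET3_ax E \<longleftrightarrow>
    (\<forall>A B C x y d A' B' C' x' y' d' a b.
        Real E A B C x y d \<longrightarrow> Real E A' B' C' x' y' d' \<longrightarrow>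
        a \<in> Hom E A A' \<longrightarrow> b \<in> Hom E B B' \<longrightarrow> Cmp E b x = Cmp E x' a \<longrightarrow>
        (\<exists>c \<in> Hom E C C'. Cmp E c y = Cmp E y' b \<and> Push E a d = Pull E c d')) \<and>
    (\<forall>A B C x y d A' B' C' x' y' d' b c.
        Real E A B C x y d \<longrightarrow> Real E A' B' C' x' y' d' \<longrightarrow>
        b \<in> Hom E B B' \<longrightarrow> c \<in> Hom E C C' \<longrightarrow> Cmp E c y = Cmp E y' b \<longrightarrow>
        (\<exists>a \<in> Hom E A A'. Cmp E b x = Cmp E x' a \<and> Push E a d = Pull E c d'))"

definition ET4_ax :: "('o,'m,'e) ecat \<Rightarrow> bool" where
  "ET4_ax E \<longleftrightarrow>
    (\<forall>A B C D F f f' g g' d d'.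
        Real E A B D f f' d \<longrightarrow> Real E B C F g g' d' \<longrightarrow>
        (\<exists>X h' dd e d''.
           Real E A C X (Cmp E g f) h' d'' \<and>
           Real E D X F dd e (Push E f' d') \<and>
           Pull E dd d'' = d \<and> Push E f d'' = Pull E e d' \<and>
           Cmp E h' g = Cmp E dd f' \<and> Cmp E e h' = g')) \<and>
    (\<forall>A B C D F f f' g g' d d'.
        Real E D B A f' f d \<longrightarrow> Real E F C B g' g d' \<longrightarrow>
        (\<exists>X h' dd e d''.
           Real E X C A h' (Cmp E f g) d'' \<and>
           Real E F X D e dd (Pull E f' d') \<and>
           Push E dd d'' = d \<and> Pull E f d'' = Push E e d' \<and>
           Cmp E g h' = Cmp E f' dd \<and> Cmp E h' e = g'))"

definition extriangulated :: "('o,'m,'e) ecat \<Rightarrow> bool" where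
  "extriangulated E \<longleftrightarrow> additive_cat E \<and> biadditive_ext E \<and> realization_ax E \<and>
     ET3_ax E \<and> ET4_ax E"

definition conflation :: "('o,'m,'e) ecat \<Rightarrow> 'o \<Rightarrow> 'o \<Rightarrow> 'o \<Rightarrow> 'm \<Rightarrow> 'm \<Rightarrow> bool" where
  "conflation E A B C x y \<longleftrightarrow> (\<exists>d. Real E A B C x y d)"

definition deflation :: "('o,'m,'e) ecat \<Rightarrow> 'o \<Rightarrow> 'o \<Rightarrow> 'm \<Rightarrow> bool" where
  "deflation E A B g \<longleftrightarrow> (\<exists>K x. conflation E K A B x g)"

definition projective :: "('o,'m,'e) ecat \<Rightarrow> 'o \<Rightarrow> bool" where
  "projective E P \<longleftrightarrow> (\<forall>A B C x y c. conflation E A B C x y \<longrightarrow> c \<in> Hom E P C \<longrightarrow>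
      (\<exists>b \<in> Hom E P B. Cmp E y b = c))"

definition injective :: "('o,'m,'e) ecat \<Rightarrow> 'o \<Rightarrow> bool" where
  "injective E I \<longleftrightarrow> (\<forall>A B C x y a. conflation E A B C x y \<longrightarrow> a \<in> Hom E A I \<longrightarrow>
      (\<exists>b \<in> Hom E B I. Cmp E b x = a))"

definition enough_projectives :: "('o,'m,'e) ecat \<Rightarrow> bool" where
  "enough_projectives E \<longleftrightarrow> (\<forall>C. \<exists>A P x y. conflation E A P C x y \<and> projective E P)"

definition enough_injectives :: "('o,'m,'e) ecat \<Rightarrow> bool" where
  "enough_injectives E \<longleftrightarrow> (\<forall>A. \<exists>I C x y. conflation E A I C x y \<and> injective E I)"

definition subcategory :: "('o,'m,'e) ecat \<Rightarrow> 'o set \<Rightarrow> bool" where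
  "subcategory E X \<longleftrightarrow> (\<exists>Z \<in> X. is_zero_obj E Z) \<and>
     (\<forall>A B b. A \<in> X \<longrightarrow> is_iso E b A B \<longrightarrow> B \<in> X) \<and>
     (\<forall>S A B i1 i2 p1 p2. is_biprod E S A B i1 i2 p1 p2 \<longrightarrow> A \<in> X \<longrightarrow> B \<in> X \<longrightarrow> S \<in> X)"

definition summand_closed :: "('o,'m,'e) ecat \<Rightarrow> 'o set \<Rightarrow> bool" where
  "summand_closed E X \<longleftrightarrow> (\<forall>S A B i1 i2 p1 p2. is_biprod E S A B i1 i2 p1 p2 \<longrightarrow> S \<in> X \<longrightarrow>
      A \<in> X \<and> B \<in> X)"

definition perp1 :: "('o,'m,'e) ecat \<Rightarrow> 'o set \<Rightarrow> 'o set" where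
  "perp1 E X = {B. \<forall>C \<in> X. Ext E C B = {EZero E C B}}"

definition rigid :: "('o,'m,'e) ecat \<Rightarrow> 'o set \<Rightarrow> bool" where
  "rigid E X \<longleftrightarrow> (\<forall>C \<in> X. \<forall>C' \<in> X. Ext E C C' = {EZero E C C'})"

definition cotorsion_pair :: "('o,'m,'e) ecat \<Rightarrow> 'o set \<Rightarrow> 'o set \<Rightarrow> bool" where
  "cotorsion_pair E U V \<longleftrightarrow>
     subcategory E U \<and> subcategory E V \<and> summand_closed E U \<and> summand_closed E V \<and>
     (\<forall>X \<in> U. \<forall>Y \<in> V. Ext E X Y = {EZero E X Y}) \<and>
     (\<forall>B. \<exists>VB UB x y. VB \<in> V \<and> UB \<in> U \<and> conflation E VB UB B x y) \<and>
     (\<forall>B. \<exists>VB UB x y. VB \<in> V \<and> UB \<in> U \<and> conflation E B VB UB x y)"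

definition heart_objs :: "('o,'m,'e) ecat \<Rightarrow> 'o set \<Rightarrow> 'o set \<Rightarrow> 'o set" where
  "heart_objs E U V = {B.
     (\<exists>VB UB x y. VB \<in> V \<and> UB \<in> U \<inter> V \<and> conflation E VB UB B x y) \<and>
     (\<exists>VB UB x y. VB \<in> U \<inter> V \<and> UB \<in> U \<and> conflation E B VB UB x y)}"

definition factors_through :: "('o,'m,'e) ecat \<Rightarrow> 'o set \<Rightarrow> 'o \<Rightarrow> 'o \<Rightarrow> 'm \<Rightarrow> bool" where
  "factors_through E X A B f \<longleftrightarrow>
     (\<exists>Z \<in> X. \<exists>u \<in> Hom E A Z. \<exists>v \<in> Hom E Z B. f = Cmp E v u)"

text \<open>The image of g : A -> B in the ideal quotient Hc / X is an epimorphism there: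
  two morphisms h1, h2 : B -> Y (Y in Hc) with equal classes after composing with g have equal classes.\<close>
definition quotient_epi :: "('o,'m,'e) ecat \<Rightarrow> 'o set \<Rightarrow> 'o set \<Rightarrow> 'o \<Rightarrow> 'o \<Rightarrow> 'm \<Rightarrow> bool" where
  "quotient_epi E Hc X A B g \<longleftrightarrow>
     (\<forall>Y \<in> Hc. \<forall>h1 \<in> Hom E B Y. \<forall>h2 \<in> Hom E B Y.
        factors_through E X A Y (MAdd E (Cmp E h1 g) (MNeg E (Cmp E h2 g))) \<longrightarrow>
        factors_through E X B Y (MAdd E h1 (MNeg E h2)))"

definition Omega :: "('o,'m,'e) ecat \<Rightarrow> 'o set \<Rightarrow> 'o set" where
  "Omega E X = {U. \<exists>P C x y. conflation E U P C x y \<and> projective E P \<and> C \<in> X}"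

end

theory Submission
  imports Defs
begin

text \<open>
  Write \<open>\<theta> : A \<rightarrowtail> C\<^sub>A \<twoheadrightarrow> U\<^sub>A\<close> and \<open>\<zeta> : B \<rightarrowtail> C\<^sub>0 \<twoheadrightarrow> C\<^sub>1\<close> for the conflations with terms in \<open>\<C>\<close>
  witnessing \<open>A, B \<in> \<H>\<close>. Rigidity of \<open>\<C>\<close> gives \<open>u : U\<^sub>A \<rightarrow> C\<^sub>1\<close> with \<open>g\<^sub>* \<theta> = u\<^sup>* \<zeta>\<close>, and
  by (ET4)\<open>\<^sup>o\<^sup>p\<close> the pullback \<open>u\<^sup>* \<zeta> : B \<rightarrowtail>\<^sup>e Y \<twoheadrightarrow> U\<^sub>A\<close> has \<open>Y \<in> \<H>\<close>. Since \<open>e g\<close> factors through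
  \<open>C\<^sub>A\<close>, the epimorphism \<open>g\<close> of the heart forces \<open>e\<close> to factor through \<open>\<C>\<close>. For
  \<open>\<epsilon> : X \<rightarrowtail> P \<twoheadrightarrow> C\<close> with \<open>P\<close> projective this yields \<open>c : C \<rightarrow> U\<^sub>A\<close> with
  \<open>b\<^sub>* \<epsilon> = c\<^sup>* u\<^sup>* \<zeta> = g\<^sub>* c\<^sup>* \<theta> = (g a\<^sub>0)\<^sub>* \<epsilon>\<close> for some \<open>a\<^sub>0 : X \<rightarrow> A\<close>. Hence \<open>b - g a\<^sub>0\<close>
  extends over \<open>P\<close>, and lifting that extension along the deflation \<open>g\<close> corrects \<open>a\<^sub>0\<close>.
\<close>

lemma rigid_subset_perp1: "rigid E \<C> \<Longrightarrow> \<C> \<subseteq> perp1 E \<C>"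
  unfolding rigid_def perp1_def by blast

lemma heart_objs_of_conflation:
  assumes "cotorsion_pair E \<C> (perp1 E \<C>)" and "rigid E \<C>"
    and "conflation E Y C' C'' x y" and "C' \<in> \<C>" and "C'' \<in> \<C>"
  shows "Y \<in> heart_objs E \<C> (perp1 E \<C>)"
  using assms rigid_subset_perp1[OF assms(2)]
  unfolding heart_objs_def cotorsion_pair_def by blast

locale extriangulated_category =
  fixes E :: "('o,'m,'e) ecat"
  assumes extriangulated: "extriangulated E"
begin

subsection \<open>Additive structure\<close>

lemma additive: "additive_cat E"
  using extriangulated unfolding extriangulated_def by simp

lemma hom_cmp [intro]: "f \<in> Hom E A B \<Longrightarrow> g \<in> Hom E B D \<Longrightarrow> Cmp E g f \<in> Hom E A D"
  using additive unfolding additive_cat_def by simp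

lemma cmp_assoc:
  "f \<in> Hom E A B \<Longrightarrow> g \<in> Hom E B D \<Longrightarrow> h \<in> Hom E D F \<Longrightarrow>
   Cmp E h (Cmp E g f) = Cmp E (Cmp E h g) f"
  using additive unfolding additive_cat_def by simp

lemma idn_hom [intro]: "Idn E A \<in> Hom E A A"
  using additive unfolding additive_cat_def by simp

lemma cmp_idn_right: "f \<in> Hom E A B \<Longrightarrow> Cmp E f (Idn E A) = f"
  using additive unfolding additive_cat_def by simp

lemma cmp_idn_left: "f \<in> Hom E A B \<Longrightarrow> Cmp E (Idn E B) f = f"
  using additive unfolding additive_cat_def by simp

lemma mzero_hom [intro]: "MZero E A B \<in> Hom E A B"
  using additive unfolding additive_cat_def by simp

lemma madd_hom [intro]: "f \<in> Hom E A B \<Longrightarrow> g \<in> Hom E A B \<Longrightarrow> MAdd E f g \<in> Hom E A B"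
  using additive unfolding additive_cat_def by simp

lemma mneg_hom [intro]: "f \<in> Hom E A B \<Longrightarrow> MNeg E f \<in> Hom E A B"
  using additive unfolding additive_cat_def by simp

lemma madd_comm: "f \<in> Hom E A B \<Longrightarrow> g \<in> Hom E A B \<Longrightarrow> MAdd E f g = MAdd E g f"
  using additive unfolding additive_cat_def by simp

lemma madd_assoc:
  "f \<in> Hom E A B \<Longrightarrow> g \<in> Hom E A B \<Longrightarrow> h \<in> Hom E A B \<Longrightarrow>
   MAdd E (MAdd E f g) h = MAdd E f (MAdd E g h)"
  using additive unfolding additive_cat_def by simp

lemma madd_mzero: "f \<in> Hom E A B \<Longrightarrow> MAdd E f (MZero E A B) = f"
  using additive unfolding additive_cat_def by simp

lemma madd_mneg: "f \<in> Hom E A B \<Longrightarrow> MAdd E f (MNeg E f) = MZero E A B"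
  using additive unfolding additive_cat_def by simp

lemma cmp_distrib_left:
  "f1 \<in> Hom E A B \<Longrightarrow> f2 \<in> Hom E A B \<Longrightarrow> g \<in> Hom E B D \<Longrightarrow>
   Cmp E g (MAdd E f1 f2) = MAdd E (Cmp E g f1) (Cmp E g f2)"
  using additive unfolding additive_cat_def by simp

lemma cmp_distrib_right:
  "f \<in> Hom E A B \<Longrightarrow> g1 \<in> Hom E B D \<Longrightarrow> g2 \<in> Hom E B D \<Longrightarrow>
   Cmp E (MAdd E g1 g2) f = MAdd E (Cmp E g1 f) (Cmp E g2 f)"
  using additive unfolding additive_cat_def by simp

lemma zero_obj_exists: "\<exists>Z. is_zero_obj E Z"
  using additive unfolding additive_cat_def by simp

lemma biprod_exists: "\<exists>S i1 i2 p1 p2. is_biprod E S A B i1 i2 p1 p2"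
  using additive unfolding additive_cat_def by simp

lemma mzero_madd: "f \<in> Hom E A B \<Longrightarrow> MAdd E (MZero E A B) f = f"
  by (metis madd_comm madd_mzero mzero_hom)

lemma mneg_madd: "f \<in> Hom E A B \<Longrightarrow> MAdd E (MNeg E f) f = MZero E A B"
  by (metis madd_comm madd_mneg mneg_hom)

lemma madd_idem_eq_mzero:
  assumes f: "f \<in> Hom E A B" and idem: "MAdd E f f = f"
  shows "f = MZero E A B"
proof -
  have "MZero E A B = MAdd E (MAdd E f f) (MNeg E f)"
    using f idem madd_mneg by simp
  also have "\<dots> = f"
    using f madd_assoc madd_mneg madd_mzero by (simp add: mneg_hom)
  finally show ?thesis by simp
qed

lemma cmp_mzero_left: "f \<in> Hom E A B \<Longrightarrow> Cmp E (MZero E B D) f = MZero E A D"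
  by (metis madd_mzero hom_cmp cmp_distrib_right madd_idem_eq_mzero mzero_hom)

lemma cmp_mzero_right: "g \<in> Hom E B D \<Longrightarrow> Cmp E g (MZero E A B) = MZero E A D"
  by (metis madd_mzero hom_cmp cmp_distrib_left madd_idem_eq_mzero mzero_hom)

lemma mneg_mzero: "MNeg E (MZero E A B) = MZero E A B"
  using mneg_madd[OF mzero_hom] madd_mzero[OF mneg_hom[OF mzero_hom]] by simp

lemma biprod_homs:
  "is_biprod E S A B i1 i2 p1 p2 \<Longrightarrow>
   i1 \<in> Hom E A S \<and> i2 \<in> Hom E B S \<and> p1 \<in> Hom E S A \<and> p2 \<in> Hom E S B"
  unfolding is_biprod_def by blast

lemma biprod_swap: "is_biprod E S A B i1 i2 p1 p2 \<Longrightarrow> is_biprod E S B A i2 i1 p2 p1"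
  unfolding is_biprod_def by (metis madd_comm hom_cmp)

lemma idn_zero_obj: "is_zero_obj E Z \<Longrightarrow> Idn E Z = MZero E Z Z"
  using idn_hom unfolding is_zero_obj_def by blast

lemma biprod_zero_right:
  "is_zero_obj E Z \<Longrightarrow> is_biprod E A A Z (Idn E A) (MZero E Z A) (Idn E A) (MZero E A Z)"
  unfolding is_biprod_def
  by (simp add: idn_zero_obj idn_hom mzero_hom cmp_idn_left cmp_idn_right cmp_mzero_left
      cmp_mzero_right cmp_idn_left[OF idn_hom] cmp_mzero_left[OF mzero_hom] madd_mzero[OF idn_hom])

lemma biprod_zero_left:
  "is_zero_obj E Z \<Longrightarrow> is_biprod E A Z A (MZero E Z A) (Idn E A) (MZero E A Z) (Idn E A)"
  using biprod_swap biprod_zero_right by blast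

subsection \<open>The bifunctor \<open>\<bbbE>\<close>\<close>

lemma biadditive: "biadditive_ext E"
  using extriangulated unfolding extriangulated_def by simp

lemma ezero_ext [intro]: "EZero E C A \<in> Ext E C A"
  using biadditive unfolding biadditive_ext_def by simp

lemma eneg_ext [intro]: "d \<in> Ext E C A \<Longrightarrow> ENeg E d \<in> Ext E C A"
  using biadditive unfolding biadditive_ext_def by simp

lemma eadd_assoc:
  "d \<in> Ext E C A \<Longrightarrow> d' \<in> Ext E C A \<Longrightarrow> d'' \<in> Ext E C A \<Longrightarrow>
   EAdd E (EAdd E d d') d'' = EAdd E d (EAdd E d' d'')"
  using biadditive unfolding biadditive_ext_def by simp

lemma eadd_ezero: "d \<in> Ext E C A \<Longrightarrow> EAdd E d (EZero E C A) = d"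
  using biadditive unfolding biadditive_ext_def by simp

lemma eadd_eneg: "d \<in> Ext E C A \<Longrightarrow> EAdd E d (ENeg E d) = EZero E C A"
  using biadditive unfolding biadditive_ext_def by simp

lemma push_ext [intro]: "a \<in> Hom E A A' \<Longrightarrow> d \<in> Ext E C A \<Longrightarrow> Push E a d \<in> Ext E C A'"
  using biadditive unfolding biadditive_ext_def by simp

lemma pull_ext [intro]: "c \<in> Hom E C' C \<Longrightarrow> d \<in> Ext E C A \<Longrightarrow> Pull E c d \<in> Ext E C' A"
  using biadditive unfolding biadditive_ext_def by simp

lemma push_idn: "d \<in> Ext E C A \<Longrightarrow> Push E (Idn E A) d = d"
  using biadditive unfolding biadditive_ext_def by simp

lemma pull_idn: "d \<in> Ext E C A \<Longrightarrow> Pull E (Idn E C) d = d"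
  using biadditive unfolding biadditive_ext_def by simp

lemma push_cmp:
  "a \<in> Hom E A A' \<Longrightarrow> a' \<in> Hom E A' A'' \<Longrightarrow> d \<in> Ext E C A \<Longrightarrow>
   Push E (Cmp E a' a) d = Push E a' (Push E a d)"
  using biadditive unfolding biadditive_ext_def by simp

lemma pull_cmp:
  "c \<in> Hom E C' C \<Longrightarrow> c' \<in> Hom E C'' C' \<Longrightarrow> d \<in> Ext E C A \<Longrightarrow>
   Pull E (Cmp E c c') d = Pull E c' (Pull E c d)"
  using biadditive unfolding biadditive_ext_def by simp

lemma push_pull_comm:
  "a \<in> Hom E A A' \<Longrightarrow> c \<in> Hom E C' C \<Longrightarrow> d \<in> Ext E C A \<Longrightarrow>
   Push E a (Pull E c d) = Pull E c (Push E a d)"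
  using biadditive unfolding biadditive_ext_def by simp

lemma push_eadd:
  "a \<in> Hom E A A' \<Longrightarrow> d \<in> Ext E C A \<Longrightarrow> d' \<in> Ext E C A \<Longrightarrow>
   Push E a (EAdd E d d') = EAdd E (Push E a d) (Push E a d')"
  using biadditive unfolding biadditive_ext_def by simp

lemma pull_eadd:
  "c \<in> Hom E C' C \<Longrightarrow> d \<in> Ext E C A \<Longrightarrow> d' \<in> Ext E C A \<Longrightarrow>
   Pull E c (EAdd E d d') = EAdd E (Pull E c d) (Pull E c d')"
  using biadditive unfolding biadditive_ext_def by simp

lemma push_madd:
  "a1 \<in> Hom E A A' \<Longrightarrow> a2 \<in> Hom E A A' \<Longrightarrow> d \<in> Ext E C A \<Longrightarrow>
   Push E (MAdd E a1 a2) d = EAdd E (Push E a1 d) (Push E a2 d)"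
  using biadditive unfolding biadditive_ext_def by simp

lemma eadd_idem_eq_ezero:
  assumes d: "d \<in> Ext E C A" and idem: "EAdd E d d = d"
  shows "d = EZero E C A"
proof -
  have "EZero E C A = EAdd E (EAdd E d d) (ENeg E d)"
    using d idem eadd_eneg by simp
  also have "\<dots> = d"
    using d eadd_assoc eadd_eneg eadd_ezero by (simp add: eneg_ext)
  finally show ?thesis by simp
qed

lemma push_mzero: "d \<in> Ext E C A \<Longrightarrow> Push E (MZero E A A') d = EZero E C A'"
  by (metis eadd_idem_eq_ezero madd_mzero mzero_hom push_ext push_madd)

lemma pull_ezero: "c \<in> Hom E C' C \<Longrightarrow> Pull E c (EZero E C A) = EZero E C' A"
  by (metis eadd_ezero eadd_idem_eq_ezero ezero_ext pull_eadd pull_ext)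

lemma push_ezero: "a \<in> Hom E A A' \<Longrightarrow> Push E a (EZero E C A) = EZero E C A'"
  by (metis eadd_ezero eadd_idem_eq_ezero ezero_ext push_eadd push_ext)

lemmas realization_axioms =
  extriangulated[unfolded extriangulated_def, THEN conjunct2, THEN conjunct2, THEN conjunct1,
    unfolded realization_ax_def]

lemma realization_ext: "Real E A B C x y d \<Longrightarrow> d \<in> Ext E C A"
  using realization_axioms[THEN conjunct1] by blast

lemma realization_infl: "Real E A B C x y d \<Longrightarrow> x \<in> Hom E A B"
  using realization_axioms[THEN conjunct1] by blast

lemma realization_defl: "Real E A B C x y d \<Longrightarrow> y \<in> Hom E B C"
  using realization_axioms[THEN conjunct1] by blast

lemma realization_exists: "d \<in> Ext E C A \<Longrightarrow> \<exists>B x y. Real E A B C x y d"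
  using realization_axioms[THEN conjunct2, THEN conjunct1] by blast

lemma realization_iso:
  "Real E A B C x y d \<Longrightarrow> is_iso E b B B' \<Longrightarrow> Cmp E y' b = y \<Longrightarrow>
   Real E A B' C (Cmp E b x) y' d"
  using realization_axioms[THEN conjunct2, THEN conjunct2, THEN conjunct1] by blast

lemma realization_morphism:
  "Real E A B C x y d \<Longrightarrow> Real E A' B' C' x' y' d' \<Longrightarrow>
   a \<in> Hom E A A' \<Longrightarrow> c \<in> Hom E C C' \<Longrightarrow> Push E a d = Pull E c d' \<Longrightarrow>
   \<exists>b \<in> Hom E B B'. Cmp E b x = Cmp E x' a \<and> Cmp E y' b = Cmp E c y"
  using realization_axioms[THEN conjunct2, THEN conjunct2, THEN conjunct2, THEN conjunct1]
  by blast

lemma realization_split: "is_biprod E S A C i1 i2 p1 p2 \<Longrightarrow> Real E A S C i1 p2 (EZero E C A)"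
  using realization_axioms[THEN conjunct2, THEN conjunct2, THEN conjunct2, THEN conjunct2,
      THEN conjunct1]
  by blast

lemma realization_sum:
  "Real E A B C x y d \<Longrightarrow> Real E A' B' C' x' y' d' \<Longrightarrow>
   is_biprod E SA A A' ia1 ia2 pa1 pa2 \<Longrightarrow> is_biprod E SB B B' ib1 ib2 pb1 pb2 \<Longrightarrow>
   is_biprod E SC C C' ic1 ic2 pc1 pc2 \<Longrightarrow>
   Real E SA SB SC
     (MAdd E (Cmp E ib1 (Cmp E x pa1)) (Cmp E ib2 (Cmp E x' pa2)))
     (MAdd E (Cmp E ic1 (Cmp E y pb1)) (Cmp E ic2 (Cmp E y' pb2)))
     (EAdd E (Push E ia1 (Pull E pc1 d)) (Push E ia2 (Pull E pc2 d')))"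
  by (rule realization_axioms[THEN conjunct2, THEN conjunct2, THEN conjunct2, THEN conjunct2,
      THEN conjunct2, rule_format])

lemma ET3:
  "Real E A B C x y d \<Longrightarrow> Real E A' B' C' x' y' d' \<Longrightarrow>
   a \<in> Hom E A A' \<Longrightarrow> b \<in> Hom E B B' \<Longrightarrow> Cmp E b x = Cmp E x' a \<Longrightarrow>
   \<exists>c \<in> Hom E C C'. Cmp E c y = Cmp E y' b \<and> Push E a d = Pull E c d'"
  using extriangulated unfolding extriangulated_def ET3_ax_def by (elim conjE) meson

lemma ET3_op:
  "Real E A B C x y d \<Longrightarrow> Real E A' B' C' x' y' d' \<Longrightarrow>
   b \<in> Hom E B B' \<Longrightarrow> c \<in> Hom E C C' \<Longrightarrow> Cmp E c y = Cmp E y' b \<Longrightarrow>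
   \<exists>a \<in> Hom E A A'. Cmp E b x = Cmp E x' a \<and> Push E a d = Pull E c d'"
  using extriangulated unfolding extriangulated_def ET3_ax_def by (elim conjE) meson

lemma ET4_op:
  "Real E D B A f' f d \<Longrightarrow> Real E F C B g' g d' \<Longrightarrow>
   \<exists>X h' dd e d''.
     Real E X C A h' (Cmp E f g) d'' \<and> Real E F X D e dd (Pull E f' d') \<and>
     Push E dd d'' = d \<and> Pull E f d'' = Push E e d' \<and>
     Cmp E g h' = Cmp E f' dd \<and> Cmp E h' e = g'"
  using extriangulated unfolding extriangulated_def ET4_ax_def by (elim conjE) meson

subsection \<open>Extending and lifting along conflations\<close>

lemma inflation_extend:
  assumes r: "Real E A B C x y d" and f: "f \<in> Hom E A W"
    and vanish: "Push E f d = EZero E C W"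
  shows "\<exists>p \<in> Hom E B W. Cmp E p x = f"
proof -
  obtain Z where Z: "is_zero_obj E Z" using zero_obj_exists by blast
  have "Push E f d = Pull E (MZero E C Z) (EZero E Z W)"
    using vanish pull_ezero[OF mzero_hom] by simp
  from realization_morphism[OF r realization_split[OF biprod_zero_right[OF Z]] f mzero_hom this]
  show ?thesis using cmp_idn_left[OF f] by auto
qed

lemma inflation_extend_rigid:
  assumes "rigid E \<C>" and r: "Real E A B C x y d" and "C \<in> \<C>"
    and f: "f \<in> Hom E A W" and "W \<in> \<C>"
  shows "\<exists>p \<in> Hom E B W. Cmp E p x = f"
proof -
  have "Push E f d \<in> Ext E C W" using f realization_ext[OF r] by blast
  then have "Push E f d = EZero E C W" using assms unfolding rigid_def by blast
  then show ?thesis using inflation_extend[OF r f] by blast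
qed

lemma projective_push_surj:
  assumes r: "Real E X P C x y \<epsilon>" and P: "projective E P" and \<eta>: "\<eta> \<in> Ext E C A"
  shows "\<exists>a \<in> Hom E X A. Push E a \<epsilon> = \<eta>"
proof -
  obtain W x' y' where r': "Real E A W C x' y' \<eta>" using realization_exists[OF \<eta>] by blast
  then obtain w where w: "w \<in> Hom E P W" "Cmp E y' w = y"
    using P realization_defl[OF r] unfolding projective_def conflation_def by blast
  then have "Cmp E (Idn E C) y = Cmp E y' w" using cmp_idn_left realization_defl[OF r] by metis
  from ET3_op[OF r r' w(1) idn_hom this] show ?thesis using pull_idn[OF \<eta>] by metis
qed

lemma deflation_lift_of_push_eq:
  assumes r: "Real E X P C x y \<epsilon>" and P: "projective E P"
    and g: "g \<in> Hom E A B" and "deflation E A B g"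
    and a0: "a0 \<in> Hom E X A" and b: "b \<in> Hom E X B"
    and push_eq: "Push E b \<epsilon> = Push E (Cmp E g a0) \<epsilon>"
  shows "\<exists>a \<in> Hom E X A. Cmp E g a = b"
proof -
  have \<epsilon>: "\<epsilon> \<in> Ext E C X" using realization_ext[OF r] .
  have x: "x \<in> Hom E X P" using realization_infl[OF r] .
  have ga0: "Cmp E g a0 \<in> Hom E X B" using a0 g by blast
  define d where "d = MAdd E b (MNeg E (Cmp E g a0))"
  have d: "d \<in> Hom E X B" unfolding d_def using b ga0 by blast
  have "Push E d \<epsilon> = EAdd E (Push E (Cmp E g a0) \<epsilon>) (Push E (MNeg E (Cmp E g a0)) \<epsilon>)"
    unfolding d_def using push_madd[OF b mneg_hom[OF ga0] \<epsilon>] push_eq by simp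
  also have "\<dots> = EZero E C B"
    using push_madd[OF ga0 mneg_hom[OF ga0] \<epsilon>] madd_mneg[OF ga0] push_mzero[OF \<epsilon>] by simp
  finally obtain p where p: "p \<in> Hom E P B" "Cmp E p x = d"
    using inflation_extend[OF r d] by blast
  obtain p' where p': "p' \<in> Hom E P A" "Cmp E g p' = p"
    using P p(1) \<open>deflation E A B g\<close> unfolding deflation_def projective_def by blast
  have p'x: "Cmp E p' x \<in> Hom E X A" using p'(1) x by blast
  have "Cmp E g (MAdd E a0 (Cmp E p' x)) = MAdd E (Cmp E g a0) d"
    using cmp_distrib_left[OF a0 p'x g] cmp_assoc[OF x p'(1) g] p' p(2) by simp
  also have "\<dots> = MAdd E d (Cmp E g a0)" using madd_comm[OF ga0 d] .
  also have "\<dots> = b"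
    unfolding d_def using madd_assoc[OF b mneg_hom[OF ga0] ga0] mneg_madd[OF ga0] madd_mzero[OF b]
    by simp
  finally show ?thesis using a0 p'x by blast
qed

subsection \<open>Pulling back \<open>\<C>\<close>-resolutions\<close>

lemma idn_madd_cmp:
  assumes a: "a \<in> Hom E S S" and b: "b \<in> Hom E S S" and ab: "Cmp E a b = MZero E S S"
  shows "Cmp E (MAdd E (Idn E S) a) (MAdd E (Idn E S) b) = MAdd E (Idn E S) (MAdd E a b)"
proof -
  have ia: "MAdd E (Idn E S) a \<in> Hom E S S" using a by blast
  have "Cmp E (MAdd E (Idn E S) a) (MAdd E (Idn E S) b)
      = MAdd E (MAdd E (Idn E S) a) (MAdd E (Cmp E (Idn E S) b) (Cmp E a b))"
    using cmp_distrib_left[OF idn_hom b ia] cmp_idn_right[OF ia] cmp_distrib_right[OF b idn_hom a]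
    by simp
  also have "\<dots> = MAdd E (Idn E S) (MAdd E a b)"
    using ab cmp_idn_left[OF b] madd_mzero[OF b] madd_assoc[OF idn_hom a b] by simp
  finally show ?thesis .
qed

lemma is_iso_idn_madd:
  assumes n: "n \<in> Hom E S S" and n': "n' \<in> Hom E S S"
    and "Cmp E n n' = MZero E S S" and "Cmp E n' n = MZero E S S"
    and sum: "MAdd E n n' = MZero E S S"
  shows "is_iso E (MAdd E (Idn E S) n) S S"
proof -
  have "MAdd E n' n = MZero E S S" using sum madd_comm[OF n n'] by simp
  then have "Cmp E (MAdd E (Idn E S) n') (MAdd E (Idn E S) n) = Idn E S"
    and "Cmp E (MAdd E (Idn E S) n) (MAdd E (Idn E S) n') = Idn E S"
    using assms idn_madd_cmp madd_mzero[OF idn_hom] by simp_all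
  then show ?thesis unfolding is_iso_def using n n' by blast
qed

lemma cmp_sandwich_mzero:
  assumes i: "i \<in> Hom E C S" and p: "p \<in> Hom E S U" and s: "s \<in> Hom E U C"
    and t: "t \<in> Hom E U C" and pi: "Cmp E p i = MZero E C U"
  shows "Cmp E (Cmp E i (Cmp E s p)) (Cmp E i (Cmp E t p)) = MZero E S S"
proof -
  have tp: "Cmp E t p \<in> Hom E S C" using p t by blast
  have "Cmp E (Cmp E i (Cmp E s p)) (Cmp E i (Cmp E t p))
      = Cmp E i (Cmp E s (Cmp E (Cmp E p i) (Cmp E t p)))"
    using cmp_assoc[OF tp i p] cmp_assoc[OF hom_cmp[OF tp i] p s]
      cmp_assoc[OF hom_cmp[OF tp i] hom_cmp[OF p s] i] by simp
  then show ?thesis using pi cmp_mzero_left[OF tp] cmp_mzero_right[OF s] cmp_mzero_right[OF i]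
    by simp
qed

lemma shear_is_iso:
  assumes S: "is_biprod E S C U i1 i2 p1 p2" and u: "u \<in> Hom E U C"
  shows "is_iso E (MAdd E (Idn E S) (Cmp E i1 (Cmp E u p2))) S S"
proof -
  have i1: "i1 \<in> Hom E C S" and p2: "p2 \<in> Hom E S U" using biprod_homs[OF S] by auto
  have p2i1: "Cmp E p2 i1 = MZero E C U" using S unfolding is_biprod_def by blast
  have nu: "MNeg E u \<in> Hom E U C" using u by blast
  have "MAdd E (Cmp E i1 (Cmp E u p2)) (Cmp E i1 (Cmp E (MNeg E u) p2))
      = Cmp E i1 (Cmp E (MAdd E u (MNeg E u)) p2)"
    using cmp_distrib_left[OF hom_cmp[OF p2 u] hom_cmp[OF p2 nu] i1] cmp_distrib_right[OF p2 u nu]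
    by simp
  also have "\<dots> = MZero E S S"
    using madd_mneg[OF u] cmp_mzero_left[OF p2] cmp_mzero_right[OF i1] by simp
  finally show ?thesis
    using is_iso_idn_madd cmp_sandwich_mzero[OF i1 p2 u nu p2i1]
      cmp_sandwich_mzero[OF i1 p2 nu u p2i1] i1 p2 u nu by blast
qed

text \<open>The split conflation \<open>U \<rightarrowtail> C \<oplus> U \<twoheadrightarrow> C\<close> twisted by the shear automorphism
  \<open>1 + i\<^sub>1 u p\<^sub>2\<close> of \<open>C \<oplus> U\<close>, so that its inflation has first component \<open>u\<close>.\<close>

lemma split_realization_graph:
  assumes S: "is_biprod E S C U i1 i2 p1 p2" and u: "u \<in> Hom E U C"
  shows "\<exists>x y. Real E U S C x y (EZero E C U) \<and> Cmp E p1 x = u"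
proof -
  have i1: "i1 \<in> Hom E C S" and i2: "i2 \<in> Hom E U S" and p1: "p1 \<in> Hom E S C"
    and p2: "p2 \<in> Hom E S U" using biprod_homs[OF S] by auto
  have p1i2: "Cmp E p1 i2 = MZero E U C" and p1i1: "Cmp E p1 i1 = Idn E C"
    and p2i2: "Cmp E p2 i2 = Idn E U"
    using S unfolding is_biprod_def by blast+
  define \<phi> where "\<phi> = MAdd E (Idn E S) (Cmp E i1 (Cmp E u p2))"
  have iso: "is_iso E \<phi> S S" unfolding \<phi>_def using shear_is_iso[OF S u] .
  then obtain \<psi> where \<psi>: "\<psi> \<in> Hom E S S" "Cmp E \<psi> \<phi> = Idn E S"
    unfolding is_iso_def by blast
  have "Cmp E (Cmp E p1 \<psi>) \<phi> = p1"
    using cmp_assoc[OF _ \<psi>(1) p1] \<psi>(2) cmp_idn_right[OF p1] iso unfolding is_iso_def by metis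
  with realization_split[OF biprod_swap[OF S]] iso
  have "Real E U S C (Cmp E \<phi> i2) (Cmp E p1 \<psi>) (EZero E C U)"
    by (rule realization_iso)
  moreover have "Cmp E p1 (Cmp E \<phi> i2) = u"
  proof -
    have "Cmp E (Cmp E i1 (Cmp E u p2)) i2 = Cmp E i1 u"
      using cmp_assoc[OF i2 p2 u] p2i2 cmp_idn_right[OF u]
        cmp_assoc[OF i2 hom_cmp[OF p2 u] i1] by simp
    then have "Cmp E \<phi> i2 = MAdd E i2 (Cmp E i1 u)"
      unfolding \<phi>_def
      using cmp_distrib_right[OF i2 idn_hom hom_cmp[OF hom_cmp[OF p2 u] i1]] cmp_idn_left[OF i2]
      by simp
    then show ?thesis
      using cmp_distrib_left[OF i2 hom_cmp[OF u i1] p1] p1i2 cmp_assoc[OF u i1 p1] p1i1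
        cmp_idn_left[OF u] mzero_madd[OF u] by simp
  qed
  ultimately show ?thesis by blast
qed

text \<open>The pullback along \<open>u\<close> of \<open>\<zeta> : B \<rightarrowtail> C\<^sub>0 \<twoheadrightarrow> C\<^sub>1\<close> is \<open>B \<rightarrowtail> Y \<twoheadrightarrow> U\<close>, and (ET4)\<open>\<^sup>o\<^sup>p\<close>,
  applied to the graph of \<open>u\<close> and to \<open>\<zeta> \<oplus> (0 \<rightarrowtail> U \<twoheadrightarrow> U)\<close>, produces a conflation
  \<open>Y \<rightarrowtail> C\<^sub>0 \<oplus> U \<twoheadrightarrow> C\<^sub>1\<close>.\<close>

lemma heart_pullback:
  assumes cp: "cotorsion_pair E \<C> (perp1 E \<C>)" and rg: "rigid E \<C>"
    and \<zeta>: "Real E B C0 C1 i j \<zeta>" and C0: "C0 \<in> \<C>" and C1: "C1 \<in> \<C>" and U: "U \<in> \<C>"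
    and u: "u \<in> Hom E U C1"
  shows "\<exists>Y e e'. Real E B Y U e e' (Pull E u \<zeta>) \<and> Y \<in> heart_objs E \<C> (perp1 E \<C>)"
proof -
  obtain Z where Z: "is_zero_obj E Z" using zero_obj_exists by blast
  obtain SB ib1 ib2 pb1 pb2 where SB: "is_biprod E SB C0 U ib1 ib2 pb1 pb2"
    using biprod_exists by blast
  obtain SC ic1 ic2 pc1 pc2 where SC: "is_biprod E SC C1 U ic1 ic2 pc1 pc2"
    using biprod_exists by blast
  have pc1: "pc1 \<in> Hom E SC C1" and pc2: "pc2 \<in> Hom E SC U" using biprod_homs[OF SC] by auto
  have \<zeta>_ext: "\<zeta> \<in> Ext E C1 B" using realization_ext[OF \<zeta>] .
  obtain infl defl where
    "Real E B SB SC infl defl (EAdd E (Push E (Idn E B) (Pull E pc1 \<zeta>))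
       (Push E (MZero E Z B) (Pull E pc2 (EZero E U Z))))"
    using realization_sum[OF \<zeta> realization_split[OF biprod_zero_left[OF Z]]
        biprod_zero_right[OF Z] SB SC] by blast
  moreover have "Pull E pc1 \<zeta> \<in> Ext E SC B" using pc1 \<zeta>_ext by blast
  ultimately have r0: "Real E B SB SC infl defl (Pull E pc1 \<zeta>)"
    using pull_ezero[OF pc2] push_ezero[OF mzero_hom] push_idn eadd_ezero by simp
  obtain x y where r1: "Real E U SC C1 x y (EZero E C1 U)" and px: "Cmp E pc1 x = u"
    using split_realization_graph[OF SC u] by blast
  obtain Y h' e e' d'' where "Real E Y SB C1 h' (Cmp E y defl) d''"
    and "Real E B Y U e e' (Pull E x (Pull E pc1 \<zeta>))"
    using ET4_op[OF r1 r0] by blast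
  moreover have "Pull E x (Pull E pc1 \<zeta>) = Pull E u \<zeta>"
    using pull_cmp[OF pc1 realization_infl[OF r1] \<zeta>_ext] px by simp
  moreover have "subcategory E \<C>" using cp unfolding cotorsion_pair_def by blast
  then have "SB \<in> \<C>" using SB C0 U unfolding subcategory_def by blast
  ultimately show ?thesis
    using heart_objs_of_conflation[OF cp rg] C1 unfolding conflation_def by metis
qed

lemma push_eq_pull_of_rigid:
  assumes rg: "rigid E \<C>" and \<theta>: "Real E A CA UA \<alpha> \<beta> \<theta>" and \<zeta>: "Real E B C0 C1 i j \<zeta>"
    and "UA \<in> \<C>" and "C0 \<in> \<C>" and g: "g \<in> Hom E A B"
  shows "\<exists>u \<in> Hom E UA C1. Push E g \<theta> = Pull E u \<zeta>"
proof -
  have "Cmp E i g \<in> Hom E A C0" using g realization_infl[OF \<zeta>] by blast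
  then obtain w where "w \<in> Hom E CA C0" "Cmp E w \<alpha> = Cmp E i g"
    using inflation_extend_rigid[OF rg \<theta>] assms by blast
  then show ?thesis using ET3[OF \<theta> \<zeta> g] by blast
qed

lemma factors_through_of_realization_push:
  assumes \<theta>: "Real E A CA U \<alpha> \<beta> \<theta>" and \<delta>: "Real E B Y U e e' (Push E g \<theta>)"
    and g: "g \<in> Hom E A B" and "CA \<in> \<C>"
  shows "factors_through E \<C> A Y (Cmp E e g)"
proof -
  have "Push E g \<theta> = Pull E (Idn E U) (Push E g \<theta>)"
    using pull_idn[OF realization_ext[OF \<delta>]] by simp
  then obtain \<gamma> where "\<gamma> \<in> Hom E CA Y" "Cmp E \<gamma> \<alpha> = Cmp E e g"
    using realization_morphism[OF \<theta> \<delta> g idn_hom] by blast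
  then show ?thesis
    unfolding factors_through_def using \<open>CA \<in> \<C>\<close> realization_infl[OF \<theta>] by metis
qed

lemma quotient_epi_factors_through:
  assumes "quotient_epi E H \<C> A B g" and "Y \<in> H" and e: "e \<in> Hom E B Y"
    and g: "g \<in> Hom E A B" and "factors_through E \<C> A Y (Cmp E e g)"
  shows "factors_through E \<C> B Y e"
proof -
  have "MAdd E (Cmp E e g) (MNeg E (Cmp E (MZero E B Y) g)) = Cmp E e g"
    using cmp_mzero_left[OF g] mneg_mzero madd_mzero[OF hom_cmp[OF g e]] by simp
  then have "factors_through E \<C> B Y (MAdd E e (MNeg E (MZero E B Y)))"
    using assms mzero_hom unfolding quotient_epi_def by metis
  then show ?thesis using mneg_mzero madd_mzero[OF e] by simp
qed

lemma push_eq_pull_of_factors_through: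
  assumes rg: "rigid E \<C>" and \<epsilon>: "Real E X P C x y \<epsilon>" and "C \<in> \<C>"
    and \<delta>: "Real E B Y U e e' \<delta>" and "factors_through E \<C> B Y e" and b: "b \<in> Hom E X B"
  shows "\<exists>c \<in> Hom E C U. Push E b \<epsilon> = Pull E c \<delta>"
proof -
  obtain C' s t where C': "C' \<in> \<C>" and s: "s \<in> Hom E B C'" and t: "t \<in> Hom E C' Y"
    and e: "e = Cmp E t s"
    using \<open>factors_through E \<C> B Y e\<close> unfolding factors_through_def by blast
  obtain q where q: "q \<in> Hom E P C'" "Cmp E q x = Cmp E s b"
    using inflation_extend_rigid[OF rg \<epsilon> \<open>C \<in> \<C>\<close> hom_cmp[OF b s] C'] by blast
  have "Cmp E (Cmp E t q) x = Cmp E e b"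
    using cmp_assoc[OF realization_infl[OF \<epsilon>] q(1) t] q(2) cmp_assoc[OF b s t] e by simp
  then show ?thesis using ET3[OF \<epsilon> \<delta> b hom_cmp[OF q(1) t]] by blast
qed


lemma Omega_hom_surj_of_push_factors_through:
  assumes rg: "rigid E \<C>" and \<theta>: "Real E A CA U \<alpha> \<beta> \<theta>"
    and \<delta>: "Real E B Y U e e' (Push E g \<theta>)" and "factors_through E \<C> B Y e"
    and g: "g \<in> Hom E A B" and "deflation E A B g"
    and "X \<in> Omega E \<C>" and b: "b \<in> Hom E X B"
  shows "\<exists>a \<in> Hom E X A. Cmp E g a = b"
proof -
  obtain P C x y \<epsilon> where \<epsilon>: "Real E X P C x y \<epsilon>" and P: "projective E P" and "C \<in> \<C>"
    using \<open>X \<in> Omega E \<C>\<close> unfolding Omega_def conflation_def by blast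
  obtain c where c: "c \<in> Hom E C U" "Push E b \<epsilon> = Pull E c (Push E g \<theta>)"
    using push_eq_pull_of_factors_through[OF rg \<epsilon> \<open>C \<in> \<C>\<close> \<delta>] assms(4) b by blast
  have \<theta>_ext: "\<theta> \<in> Ext E U A" using realization_ext[OF \<theta>] .
  then obtain a0 where a0: "a0 \<in> Hom E X A" "Push E a0 \<epsilon> = Pull E c \<theta>"
    using projective_push_surj[OF \<epsilon> P] c(1) by blast
  have "Push E b \<epsilon> = Push E (Cmp E g a0) \<epsilon>"
    using c(2) push_pull_comm[OF g c(1) \<theta>_ext] a0 push_cmp[OF a0(1) g realization_ext[OF \<epsilon>]]
    by simp
  then show ?thesis using deflation_lift_of_push_eq[OF \<epsilon> P g assms(6) a0(1) b] by blast
qed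
end

theorem mainTheorem7:
  fixes E :: "('o,'m,'e) ecat" and \<C> :: "'o set" and A B :: 'o and g :: 'm
  assumes "extriangulated E"
    and "enough_projectives E" and "enough_injectives E"
    and "cotorsion_pair E \<C> (perp1 E \<C>)"
    and "rigid E \<C>"
    and "A \<in> heart_objs E \<C> (perp1 E \<C>)" and "B \<in> heart_objs E \<C> (perp1 E \<C>)"
    and "g \<in> Hom E A B" and "deflation E A B g"
    and "quotient_epi E (heart_objs E \<C> (perp1 E \<C>)) \<C> A B g"
  shows "\<forall>X \<in> Omega E \<C>. \<forall>b \<in> Hom E X B. \<exists>a \<in> Hom E X A. Cmp E g a = b"
proof (intro ballI)
  interpret extriangulated_category E by (rule extriangulated_category.intro) fact
  fix X b assume "X \<in> Omega E \<C>" and "b \<in> Hom E X B"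
  obtain CA UA \<alpha> \<beta> \<theta> where \<theta>: "Real E A CA UA \<alpha> \<beta> \<theta>" and "CA \<in> \<C>" "UA \<in> \<C>"
    using \<open>A \<in> heart_objs E \<C> (perp1 E \<C>)\<close> unfolding heart_objs_def conflation_def by blast
  obtain C0 C1 i j \<zeta> where \<zeta>: "Real E B C0 C1 i j \<zeta>" and "C0 \<in> \<C>" "C1 \<in> \<C>"
    using \<open>B \<in> heart_objs E \<C> (perp1 E \<C>)\<close> unfolding heart_objs_def conflation_def by blast
  obtain u where u: "u \<in> Hom E UA C1" "Push E g \<theta> = Pull E u \<zeta>"
    using push_eq_pull_of_rigid[OF \<open>rigid E \<C>\<close> \<theta> \<zeta>] assms(8) \<open>UA \<in> \<C>\<close> \<open>C0 \<in> \<C>\<close> by blast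
  obtain Y e e' where Y: "Real E B Y UA e e' (Push E g \<theta>)" "Y \<in> heart_objs E \<C> (perp1 E \<C>)"
    using heart_pullback[OF assms(4,5) \<zeta>] u \<open>C0 \<in> \<C>\<close> \<open>C1 \<in> \<C>\<close> \<open>UA \<in> \<C>\<close> by metis
  have "factors_through E \<C> B Y e"
    using quotient_epi_factors_through[OF assms(10) Y(2) realization_infl[OF Y(1)] assms(8)]
      factors_through_of_realization_push[OF \<theta> Y(1) assms(8) \<open>CA \<in> \<C>\<close>] by blast
  then show "\<exists>a \<in> Hom E X A. Cmp E g a = b"
    using Omega_hom_surj_of_push_factors_through[OF assms(5) \<theta> Y(1) _ assms(8,9)]
      \<open>X \<in> Omega E \<C>\<close> \<open>b \<in> Hom E X B\<close> by blast
qed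

end
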